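(* In the setting of the context, let $\pi_k$ be the policy implemented in episode $k$. On the event $\mathcal E_0=\{\theta^*\in\mathcal B_k\cap\mathcal C_k\text{ for all }k\}$, for every $k$ and $h$, \begin{align*} \widehat V_{k,h}(s^{\mathrm{on}}_{k,h})-V^{\pi_k}_h(s^{\mathrm{on}}_{k,h}) &\le \widehat V_{k,h+1}(s^{\mathrm{on}}_{k,h+1})-V^{\pi_k}_{h+1}(s^{\mathrm{on}}_{k,h+1})+\xi^{\mathrm{on}}_{k,h+1}\\ &\quad+2\min\Big\{\gamma_k\big\|\phi(\cdot\mid s^{\mathrm{on}}_{k,h},a^{\mathrm{on}}_{k,h})\widehat V_{k,h+1}\big\|_{(M^{\mathrm{all}}_k)^{-1}},\ \beta_k\big\|\phi(\cdot\mid s^{\mathrm{on}}_{k,h},a^{\mathrm{on}}_{k,h})\widehat V_{k,h+1}\big\|_{(M^{\mathrm{on}}_k)^{-1}}\Big\}, \end{align*} where $\xi^{\mathrm{on}}_{k,h+1}=P(\cdot\mid s^{\mathrm{on}}_{k,h},a^{\mathrm{on}}_{k,h})^\top(\widehat V_{k,h+1}-V^{\pi_k}_{h+1})-\big(\widehat V_{k,h+1}(s^{\mathrm{on}}_{k,h+1})-V^{\pi_k}_{h+1}(s^{\mathrm{on}}_{k,h+1})\big)$.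
   Context: Online linear mixture MDP $(\mathcal S,\mathcal A,P,r,H,s_1)$, known reward in $[0,1]$, $P(s'\mid s,a)=\langle\theta^*,\phi(s'\mid s,a)\rangle$ with known $\phi:\mathcal S\times\mathcal A\times\mathcal S\to\mathbb R^d$; $\phi(\cdot\mid s,a)\in\mathbb R^{d\times|\mathcal S|}$ has columns $\phi(s'\mid s,a)$ and rows $\phi_j(\cdot\mid s,a)$. $V^{\pi}_h$ is the online value function of policy $\pi$ at stage $h$ ($V^\pi_{H+1}=0$). O-O UCRL-VTR, in episode $k$, has positive definite matrices $M^{\mathrm{all}}_k,M^{\mathrm{on}}_k$, estimates $\widehat\theta^{\mathrm{all}}_k,\widehat\theta^{\mathrm{on}}_k$, radii $\gamma_k,\beta_k>0$, sets $\mathcal B_k=\{\theta:\|\theta-\widehat\theta^{\mathrm{all}}_k\|_{M^{\mathrm{all}}_k}\le\gamma_k\}$, $\mathcal C_k=\{\theta:\|\theta-\widehat\theta^{\mathrm{on}}_k\|_{M^{\mathrm{on}}_k}\le\beta_k\}$ ($\|x\|_A=\sqrt{x^\top Ax}$), optimistic values $\widehat Q_{k,H+1}\equiv0$, $\widehat Q_{k,h}(s,a)=r(s,a)+\max_{\theta\in\mathcal B_k\cap\mathcal C_k}\sum_j\theta_j\phi_j(\cdot\mid s,a)^\top\widehat V_{k,h+1}$, $\widehat V_{k,h}(s)=\max_a\widehat Q_{k,h}(s,a)$, and implements the greedy policy $\pi_{k,h}(s)\in\arg\max_a\widehat Q_{k,h}(s,a)$, generating states $s^{\mathrm{on}}_{k,h}$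 (with $s^{\mathrm{on}}_{k,1}=s_1$), actions $a^{\mathrm{on}}_{k,h}=\pi_{k,h}(s^{\mathrm{on}}_{k,h})$ and $s^{\mathrm{on}}_{k,h+1}\sim P(\cdot\mid s^{\mathrm{on}}_{k,h},a^{\mathrm{on}}_{k,h})$. *)

theory Defs
  imports "HOL-Analysis.Analysis"
begin

definition wnorm :: "real^'d^'d \<Rightarrow> real^'d \<Rightarrow> real" where
  "wnorm A x = sqrt (x \<bullet> (A *v x))"

definition pos_def :: "real^'d^'d \<Rightarrow> bool" where
  "pos_def M \<longleftrightarrow> transpose M = M \<and> (\<forall>x. x \<noteq> 0 \<longrightarrow> x \<bullet> (M *v x) > 0)"

definition ellipsoid :: "real^'d^'d \<Rightarrow> real^'d \<Rightarrow> real \<Rightarrow> (real^'d) set" where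
  "ellipsoid M c rad = {\<theta>. wnorm M (\<theta> - c) \<le> rad}"

text \<open>phi(.|s,a) V : the vector in R^d whose j-th entry is sum_{s'} phi_j(s'|s,a) V(s').\<close>
definition phiV :: "('s::finite \<Rightarrow> 'a \<Rightarrow> 's \<Rightarrow> real^'d) \<Rightarrow> 's \<Rightarrow> 'a \<Rightarrow> ('s \<Rightarrow> real) \<Rightarrow> real^'d" where
  "phiV \<phi> s a V = (\<Sum>s'\<in>UNIV. V s' *\<^sub>R \<phi> s a s')"

definition trans :: "real^'d \<Rightarrow> ('s \<Rightarrow> 'a \<Rightarrow> 's \<Rightarrow> real^'d) \<Rightarrow> 's \<Rightarrow> 'a \<Rightarrow> 's \<Rightarrow> real" where
  "trans \<theta> \<phi> s a s' = \<theta> \<bullet> \<phi> s a s'"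

text \<open>Optimistic value with n remaining stages (n = H+1-h), optimism over the parameter set K.\<close>
fun Vhat_aux :: "('s::finite \<Rightarrow> 'a::finite \<Rightarrow> real) \<Rightarrow> ('s \<Rightarrow> 'a \<Rightarrow> 's \<Rightarrow> real^'d) \<Rightarrow> (real^'d) set
    \<Rightarrow> nat \<Rightarrow> 's \<Rightarrow> real" where
  "Vhat_aux r \<phi> K 0 s = 0"
| "Vhat_aux r \<phi> K (Suc n) s =
     Max (range (\<lambda>a. r s a + (SUP \<theta>\<in>K. \<theta> \<bullet> phiV \<phi> s a (Vhat_aux r \<phi> K n))))"

definition Vhat :: "('s::finite \<Rightarrow> 'a::finite \<Rightarrow> real) \<Rightarrow> ('s \<Rightarrow> 'a \<Rightarrow> 's \<Rightarrow> real^'d) \<Rightarrow> (real^'d) set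
    \<Rightarrow> nat \<Rightarrow> nat \<Rightarrow> 's \<Rightarrow> real" where
  "Vhat r \<phi> K H h = Vhat_aux r \<phi> K (H + 1 - h)"

definition Qhat :: "('s::finite \<Rightarrow> 'a::finite \<Rightarrow> real) \<Rightarrow> ('s \<Rightarrow> 'a \<Rightarrow> 's \<Rightarrow> real^'d) \<Rightarrow> (real^'d) set
    \<Rightarrow> nat \<Rightarrow> nat \<Rightarrow> 's \<Rightarrow> 'a \<Rightarrow> real" where
  "Qhat r \<phi> K H h s a = r s a + (SUP \<theta>\<in>K. \<theta> \<bullet> phiV \<phi> s a (Vhat r \<phi> K H (h + 1)))"

text \<open>Value of a (nonstationary, deterministic) policy pi (pi h s = action at stage h),
  n remaining stages.\<close>
fun Vpi_aux :: "('s::finite \<Rightarrow> 'a \<Rightarrow> real) \<Rightarrow> ('s \<Rightarrow> 'a \<Rightarrow> 's \<Rightarrow> real) \<Rightarrow> nat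
    \<Rightarrow> (nat \<Rightarrow> 's \<Rightarrow> 'a) \<Rightarrow> nat \<Rightarrow> 's \<Rightarrow> real" where
  "Vpi_aux r P H \<pi> 0 s = 0"
| "Vpi_aux r P H \<pi> (Suc n) s =
     r s (\<pi> (H - n) s) + (\<Sum>s'\<in>UNIV. P s (\<pi> (H - n) s) s' * Vpi_aux r P H \<pi> n s')"

definition Vpi :: "('s::finite \<Rightarrow> 'a \<Rightarrow> real) \<Rightarrow> ('s \<Rightarrow> 'a \<Rightarrow> 's \<Rightarrow> real) \<Rightarrow> nat
    \<Rightarrow> (nat \<Rightarrow> 's \<Rightarrow> 'a) \<Rightarrow> nat \<Rightarrow> 's \<Rightarrow> real" where
  "Vpi r P H \<pi> h = Vpi_aux r P H \<pi> (H + 1 - h)"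

end

theory Submission
  imports Defs
begin

text \<open>Since the greedy action attains the maximum, the optimistic value at stage h and the
  value of the policy share the reward term, and their gap is the optimistic backup
  \<open>sup\<^sub>\<theta>\<^sub>\<in>\<^sub>K \<theta> \<bullet> \<phi> V\<close> of the next optimistic values V minus the true backup of the next policy
  values. Splitting off \<open>\<theta>* \<bullet> \<phi> V\<close>, the true backup of V, leaves the expected next-stage gap,
  which is the realised gap plus \<open>\<xi>\<close>, and the excess of \<open>\<theta> \<bullet> \<phi> V\<close> over \<open>\<theta>* \<bullet> \<phi> V\<close>. Both
  parameters lie in each of the two ellipsoids, so Cauchy-Schwarz for the form of its matrix M
  bounds this excess by \<open>2 \<rho> \<parallel>\<phi> V\<parallel>\<close> in the norm of M\<inverse>, where \<open>\<rho>\<close> is the radius.\<close>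

lemma matrix_mul_matrix_inv:
  fixes A :: "'a::semiring_1^'n^'m"
  assumes "invertible A"
  shows "A ** matrix_inv A = mat 1"
  using assms unfolding invertible_def matrix_inv_def by (rule someI_ex[THEN conjunct1])

lemma pos_def_invertible:
  fixes M :: "real^'d^'d"
  assumes "pos_def M"
  shows "invertible M"
proof -
  have "\<forall>x. M *v x = 0 \<longrightarrow> x = 0"
    using assms unfolding pos_def_def by (metis inner_zero_right less_irrefl)
  then show ?thesis
    using invertible_left_inverse matrix_left_invertible_ker by blast
qed

lemma pos_def_mult_matrix_inv:
  fixes M :: "real^'d^'d"
  assumes "pos_def M"
  shows "M *v (matrix_inv M *v v) = v"
  by (metis assms matrix_mul_matrix_inv matrix_vector_mul_assoc matrix_vector_mul_lid
      pos_def_invertible)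

lemma pos_def_inner_commute:
  fixes M :: "real^'d^'d"
  assumes "pos_def M"
  shows "x \<bullet> (M *v y) = y \<bullet> (M *v x)"
proof -
  have "x \<bullet> (M *v y) = (transpose M *v x) \<bullet> y"
    by (simp add: dot_lmul_matrix transpose_matrix_vector)
  then show ?thesis
    using assms unfolding pos_def_def by (simp add: inner_commute)
qed

lemma pos_def_form_nonneg:
  fixes M :: "real^'d^'d"
  assumes "pos_def M"
  shows "0 \<le> x \<bullet> (M *v x)"
  using assms unfolding pos_def_def by (cases "x = 0") (auto intro: less_imp_le)

lemma pos_def_Cauchy_Schwarz:
  fixes M :: "real^'d^'d"
  assumes pd: "pos_def M"
  shows "(x \<bullet> (M *v y))\<^sup>2 \<le> (x \<bullet> (M *v x)) * (y \<bullet> (M *v y))"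
proof (cases "y = 0")
  case True
  then show ?thesis by simp
next
  case False
  let ?a = "x \<bullet> (M *v x)" and ?b = "y \<bullet> (M *v y)" and ?c = "x \<bullet> (M *v y)"
  have b_pos: "?b > 0"
    using pd False unfolding pos_def_def by auto
  define t where "t = - ?c / ?b"
  have "0 \<le> (x + t *\<^sub>R y) \<bullet> (M *v (x + t *\<^sub>R y))"
    by (rule pos_def_form_nonneg[OF pd])
  also have "\<dots> = ?a + t * ?c + t * (y \<bullet> (M *v x)) + t * t * ?b"
    by (simp add: matrix_vector_right_distrib inner_add_left inner_add_right algebra_simps)
  also have "\<dots> = ?a - ?c\<^sup>2 / ?b"
    using b_pos pos_def_inner_commute[OF pd, of y x]
    unfolding t_def by (simp add: field_simps power2_eq_square)
  finally show ?thesis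
    using b_pos by (simp add: field_simps)
qed

lemma wnorm_matrix_inv_nonneg:
  fixes M :: "real^'d^'d"
  assumes pd: "pos_def M"
  shows "0 \<le> wnorm (matrix_inv M) v"
proof -
  have "v \<bullet> (matrix_inv M *v v) = (matrix_inv M *v v) \<bullet> (M *v (matrix_inv M *v v))"
    by (simp add: pos_def_mult_matrix_inv[OF pd] inner_commute)
  then show ?thesis
    unfolding wnorm_def using pos_def_form_nonneg[OF pd] by simp
qed

lemma abs_inner_le_wnorm_mult_wnorm_matrix_inv:
  fixes M :: "real^'d^'d"
  assumes pd: "pos_def M"
  shows "\<bar>x \<bullet> v\<bar> \<le> wnorm M x * wnorm (matrix_inv M) v"
proof -
  define u where "u = matrix_inv M *v v"
  have v: "v = M *v u"
    using pos_def_mult_matrix_inv[OF pd] u_def by simp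
  have u_form: "u \<bullet> (M *v u) = v \<bullet> (matrix_inv M *v v)"
    using v u_def by (simp add: inner_commute)
  have "\<bar>x \<bullet> v\<bar> = sqrt ((x \<bullet> (M *v u))\<^sup>2)"
    using v by simp
  also have "\<dots> \<le> sqrt ((x \<bullet> (M *v x)) * (u \<bullet> (M *v u)))"
    by (rule real_sqrt_le_mono[OF pos_def_Cauchy_Schwarz[OF pd]])
  also have "\<dots> = wnorm M x * wnorm (matrix_inv M) v"
    unfolding wnorm_def u_form by (simp add: real_sqrt_mult)
  finally show ?thesis .
qed

lemma ellipsoid_inner_diff_le:
  fixes M :: "real^'d^'d"
  assumes pd: "pos_def M" and "\<theta> \<in> ellipsoid M c \<rho>" and "\<theta>' \<in> ellipsoid M c \<rho>"
  shows "\<theta> \<bullet> v - \<theta>' \<bullet> v \<le> 2 * (\<rho> * wnorm (matrix_inv M) v)"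
proof -
  have bound: "\<bar>(\<eta> - c) \<bullet> v\<bar> \<le> \<rho> * wnorm (matrix_inv M) v" if "\<eta> \<in> ellipsoid M c \<rho>" for \<eta>
  proof -
    have "wnorm M (\<eta> - c) * wnorm (matrix_inv M) v \<le> \<rho> * wnorm (matrix_inv M) v"
      using that wnorm_matrix_inv_nonneg[OF pd] unfolding ellipsoid_def
      by (simp add: mult_right_mono)
    then show ?thesis
      using abs_inner_le_wnorm_mult_wnorm_matrix_inv[OF pd] order_trans by blast
  qed
  have "\<theta> \<bullet> v - \<theta>' \<bullet> v = (\<theta> - c) \<bullet> v - (\<theta>' - c) \<bullet> v"
    by (simp add: inner_diff_left)
  then show ?thesis
    using bound[OF assms(2)] bound[OF assms(3)] by linarith
qed

lemma SUP_inner_ellipsoid_Int_le: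
  fixes M N :: "real^'d^'d"
  assumes "pos_def M" and "pos_def N"
    and \<theta>': "\<theta>' \<in> ellipsoid M c \<rho> \<inter> ellipsoid N e \<sigma>"
  shows "(SUP \<theta>\<in>ellipsoid M c \<rho> \<inter> ellipsoid N e \<sigma>. \<theta> \<bullet> v)
    \<le> \<theta>' \<bullet> v + 2 * min (\<rho> * wnorm (matrix_inv M) v) (\<sigma> * wnorm (matrix_inv N) v)"
proof (rule cSUP_least)
  show "ellipsoid M c \<rho> \<inter> ellipsoid N e \<sigma> \<noteq> {}"
    using \<theta>' by blast
next
  fix \<theta> assume "\<theta> \<in> ellipsoid M c \<rho> \<inter> ellipsoid N e \<sigma>"
  then show "\<theta> \<bullet> v \<le> \<theta>' \<bullet> v + 2 * min (\<rho> * wnorm (matrix_inv M) v) (\<sigma> * wnorm (matrix_inv N) v)"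
    using ellipsoid_inner_diff_le[OF assms(1), of \<theta> c \<rho> \<theta>' v]
      ellipsoid_inner_diff_le[OF assms(2), of \<theta> e \<sigma> \<theta>' v] \<theta>'
    by auto
qed

lemma sum_trans_mult_eq_inner_phiV:
  "(\<Sum>t\<in>UNIV. trans \<theta> \<phi> s a t * V t) = \<theta> \<bullet> phiV \<phi> s a V"
  unfolding trans_def phiV_def by (simp add: inner_sum_right mult.commute)

lemma Vhat_eq_Max_Qhat:
  assumes "h \<le> H"
  shows "Vhat r \<phi> K H h s = Max (range (Qhat r \<phi> K H h s))"
proof -
  have "H + 1 - h = Suc (H + 1 - (h + 1))"
    using assms by simp
  then show ?thesis
    unfolding Vhat_def Qhat_def by simp
qed

lemma Vhat_eq_Qhat_greedy:
  assumes "h \<le> H" and "\<And>b. Qhat r \<phi> K H h s b \<le> Qhat r \<phi> K H h s a"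
  shows "Vhat r \<phi> K H h s = Qhat r \<phi> K H h s a"
  unfolding Vhat_eq_Max_Qhat[OF assms(1)] by (rule Max_eqI) (auto intro: assms(2))

lemma Vpi_Bellman:
  assumes "h \<le> H"
  shows "Vpi r P H \<pi> h s
    = r s (\<pi> h s) + (\<Sum>t\<in>UNIV. P s (\<pi> h s) t * Vpi r P H \<pi> (h + 1) t)"
proof -
  have "H + 1 - h = Suc (H - h)" "H + 1 - (h + 1) = H - h" "H - (H - h) = h"
    using assms by auto
  then show ?thesis
    unfolding Vpi_def by simp
qed

theorem lemmaC3:
  fixes r :: "'s::finite \<Rightarrow> 'a::finite \<Rightarrow> real"
    and \<phi> :: "'s \<Rightarrow> 'a \<Rightarrow> 's \<Rightarrow> real^'d::finite"
    and \<theta>star :: "real^'d"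
    and H :: nat and s1 :: 's
    and Mall Mon :: "nat \<Rightarrow> real^'d^'d"
    and \<theta>all \<theta>on :: "nat \<Rightarrow> real^'d"
    and \<gamma> \<beta> :: "nat \<Rightarrow> real"
    and \<pi> :: "nat \<Rightarrow> nat \<Rightarrow> 's \<Rightarrow> 'a"
    and son :: "nat \<Rightarrow> nat \<Rightarrow> 's"
    and k h :: nat
  defines "P \<equiv> trans \<theta>star \<phi>"
    and "K \<equiv> (\<lambda>k. ellipsoid (Mall k) (\<theta>all k) (\<gamma> k) \<inter> ellipsoid (Mon k) (\<theta>on k) (\<beta> k))"
  assumes reward: "\<And>s a. 0 \<le> r s a \<and> r s a \<le> 1"
    and P_nonneg: "\<And>s a s'. 0 \<le> P s a s'"
    and P_sum: "\<And>s a. (\<Sum>s'\<in>UNIV. P s a s') = 1"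
    and Mall_pd: "\<And>k. pos_def (Mall k)"
    and Mon_pd: "\<And>k. pos_def (Mon k)"
    and \<gamma>_pos: "\<And>k. \<gamma> k > 0"
    and \<beta>_pos: "\<And>k. \<beta> k > 0"
    and greedy: "\<And>k h s a. Qhat r \<phi> (K k) H h s a \<le> Qhat r \<phi> (K k) H h s (\<pi> k h s)"
    and start: "\<And>k. son k 1 = s1"
    and E0: "\<And>k. \<theta>star \<in> K k"
    and h_range: "1 \<le> h" "h \<le> H"
  shows "(let s = son k h; a = \<pi> k h s; s' = son k (h + 1);
             Vh = Vhat r \<phi> (K k) H; Vp = Vpi r P H (\<pi> k);
             \<xi> = (\<Sum>t\<in>UNIV. P s a t * (Vh (h + 1) t - Vp (h + 1) t))
                 - (Vh (h + 1) s' - Vp (h + 1) s')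
         in Vh h s - Vp h s
            \<le> Vh (h + 1) s' - Vp (h + 1) s' + \<xi>
              + 2 * min (\<gamma> k * wnorm (matrix_inv (Mall k)) (phiV \<phi> s a (Vh (h + 1))))
                        (\<beta> k * wnorm (matrix_inv (Mon k)) (phiV \<phi> s a (Vh (h + 1)))))"
proof -
  define s where "s = son k h"
  define a where "a = \<pi> k h s"
  define V where "V = Vhat r \<phi> (K k) H (h + 1)"
  define W where "W = Vpi r P H (\<pi> k) (h + 1)"
  define m where "m = min (\<gamma> k * wnorm (matrix_inv (Mall k)) (phiV \<phi> s a V))
                          (\<beta> k * wnorm (matrix_inv (Mon k)) (phiV \<phi> s a V))"
  have "Vhat r \<phi> (K k) H h s = r s a + (SUP \<theta>\<in>K k. \<theta> \<bullet> phiV \<phi> s a V)"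
    using Vhat_eq_Qhat_greedy[OF h_range(2) greedy] unfolding Qhat_def a_def V_def .
  also have "\<dots> \<le> r s a + \<theta>star \<bullet> phiV \<phi> s a V + 2 * m"
    using SUP_inner_ellipsoid_Int_le[OF Mall_pd Mon_pd E0[unfolded K_def]]
    unfolding K_def m_def by simp
  also have "\<theta>star \<bullet> phiV \<phi> s a V = (\<Sum>t\<in>UNIV. P s a t * V t)"
    unfolding P_def sum_trans_mult_eq_inner_phiV ..
  finally have "Vhat r \<phi> (K k) H h s - Vpi r P H (\<pi> k) h s
      \<le> (\<Sum>t\<in>UNIV. P s a t * V t) - (\<Sum>t\<in>UNIV. P s a t * W t) + 2 * m"
    unfolding Vpi_Bellman[OF h_range(2)] a_def W_def by simp
  then show ?thesis
    unfolding Let_def s_def[symmetric] a_def[symmetric] V_def[symmetric] W_def[symmetric]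
      m_def[symmetric]
    by (simp add: right_diff_distrib sum_subtractf)
qed

end
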